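(* Let $\mathbf{L}$ be an intermediate propositional logic and let $\mathbf{QL}$ be an intermediate predicate logic. For all formulas $A(x)$ and $B$ with $x$ not free in $B$: (1) the $\varepsilon\tau$-translations $(\mathit{CD})^{\varepsilon\tau}$, $(Q_\exists)^{\varepsilon\tau}$ and $(Q_\forall)^{\varepsilon\tau}$ are provable in the $\varepsilon\tau$-calculus $\varepsilon\tau(\mathbf{L})$; (2) the formulas $\mathit{CD}$, $Q_\exists$ and $Q_\forall$ themselves are provable in the extended calculus $\varepsilon\tau^+(\mathbf{QL})$, where $\mathit{CD}$: $\forall x(A(x)\lor B)\to(\forall x\,A(x)\lor B)$; $Q_\exists$: $(B\to\exists x\,A(x))\to\exists x(B\to A(x))$; $Q_\forall$: $(\forall x\,A(x)\to B)\to\exists x(A(x)\to B)$.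
   Context: An intermediate propositional logic is a set of propositional formulas containing intuitionistic propositional logic, contained in classical propositional logic, and closed under modus ponens and substitution. An intermediate predicate logic is a set of first-order formulas containing intuitionistic predicate logic, contained in classical predicate logic, closed under substitution, modus ponens and the quantifier rules "from $B\to A(x)$ infer $B\to\forall y\,A(y)$" and "from $A(x)\to B$ infer $\exists y\,A(y)\to B$" ($x$ not free in the conclusion). $\varepsilon\tau$-terms: for any formula $A(x)$ with $x$ free, $\varepsilon x\,A(x)$ and $\tau x\,A(x)$ are terms (terms are identified up to renaming of bound variables; substitution renames bound variables to avoid clashes). Critical formulas are all formulas $A(t)\to A(\varepsilon x\,A(x))$ and $A(\tau x\,A(x))\to A(t)$, $t$ any term. $\varepsilon\tau(\mathbf{L})$: the quantifier-free language with predicate symbols, function symbols and $\varepsilon\tau$-terms (formulas inside $\varepsilon\tau$-terms also quantifier-free); $\vdash_{\varepsilon\tau(\mathbf{L})}B$ means there is a finite sequence of formulas ending in $B$ each of which is a substitution instance of a formula of $\mathbf{L}$, a critical formula, or follows from earlier ones by modus ponens. $\varepsilon\tau^+(\mathbf{QL})$: the full first-order language with quantifiers extended by $\varepsilon\tau$-terms (built from arbitrary formulas) and critical formulas; provability means derivability in $\mathbf{QL}$ (its axioms, modus ponens, quantifier rules) from critical formulas. The $\varepsilon\tau$-translation $A^{\varepsilon\tau}$: identity on atomic formulas, commutes with $\land,\lor,\to,\lnot$, $(\exists x\,A(x))^{\varepsilon\tau}=A^{\varepsilon\tau}(\varepsilon x\,A^{\varepsilon\tau}(x))$, $(\forall x\,A(x))^{\varepsilon\tau}=A^{\varepsilon\tau}(\tau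 x\,A^{\varepsilon\tau}(x))$. *)

theory Defs
  imports Main
begin

datatype pf = PV nat | PNeg pf | PConj pf pf | PDisj pf pf | PImp pf pf

inductive ipc :: "pf \<Rightarrow> bool" where
  i1: "ipc (PImp A (PImp B A))"
| i2: "ipc (PImp (PImp A B) (PImp (PImp A (PImp B C)) (PImp A C)))"
| i3: "ipc (PImp A (PImp B (PConj A B)))"
| i4: "ipc (PImp (PConj A B) A)"
| i5: "ipc (PImp (PConj A B) B)"
| i6: "ipc (PImp A (PDisj A B))"
| i7: "ipc (PImp B (PDisj A B))"
| i8: "ipc (PImp (PImp A C) (PImp (PImp B C) (PImp (PDisj A B) C)))"
| i9: "ipc (PImp (PImp A B) (PImp (PImp A (PNeg B)) (PNeg A)))"
| i10: "ipc (PImp (PNeg A) (PImp A B))"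
| mp: "ipc (PImp A B) \<Longrightarrow> ipc A \<Longrightarrow> ipc B"

primrec peval :: "(nat \<Rightarrow> bool) \<Rightarrow> pf \<Rightarrow> bool" where
  "peval v (PV n) = v n"
| "peval v (PNeg A) = (\<not> peval v A)"
| "peval v (PConj A B) = (peval v A \<and> peval v B)"
| "peval v (PDisj A B) = (peval v A \<or> peval v B)"
| "peval v (PImp A B) = (peval v A \<longrightarrow> peval v B)"

definition cpc :: "pf \<Rightarrow> bool" where
  "cpc A \<longleftrightarrow> (\<forall>v. peval v A)"

primrec psubP :: "(nat \<Rightarrow> pf) \<Rightarrow> pf \<Rightarrow> pf" where
  "psubP s (PV n) = s n"
| "psubP s (PNeg A) = PNeg (psubP s A)"
| "psubP s (PConj A B) = PConj (psubP s A) (psubP s B)"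
| "psubP s (PDisj A B) = PDisj (psubP s A) (psubP s B)"
| "psubP s (PImp A B) = PImp (psubP s A) (psubP s B)"

definition intermediate_prop :: "pf set \<Rightarrow> bool" where
  "intermediate_prop L \<longleftrightarrow>
     {A. ipc A} \<subseteq> L \<and> L \<subseteq> {A. cpc A} \<and>
     (\<forall>A B. PImp A B \<in> L \<longrightarrow> A \<in> L \<longrightarrow> B \<in> L) \<and>
     (\<forall>s A. A \<in> L \<longrightarrow> psubP s A \<in> L)"

section \<open>First-order formulas with epsilon/tau terms (locally nameless)\<close>

text \<open>Free variables are names Fr n; bound variables are de Bruijn indices Bd i.
  Eps A and Tau A bind index 0 in A, as do All A and Ex A. Terms are thus
  identified up to renaming of bound variables automatically.\<close>

datatype ('f,'p) trm = Fr nat | Bd nat | Fn 'f "('f,'p) trm list"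
  | Eps "('f,'p) fm" | Tau "('f,'p) fm"
and ('f,'p) fm = Atom 'p "('f,'p) trm list" | Neg "('f,'p) fm"
  | Conj "('f,'p) fm" "('f,'p) fm" | Disj "('f,'p) fm" "('f,'p) fm"
  | Imp "('f,'p) fm" "('f,'p) fm" | All "('f,'p) fm" | Ex "('f,'p) fm"

primrec liftT :: "nat \<Rightarrow> nat \<Rightarrow> ('f,'p) trm \<Rightarrow> ('f,'p) trm"
  and liftF :: "nat \<Rightarrow> nat \<Rightarrow> ('f,'p) fm \<Rightarrow> ('f,'p) fm" where
  "liftT c n (Fr x) = Fr x"
| "liftT c n (Bd i) = (if c \<le> i then Bd (i + n) else Bd i)"
| "liftT c n (Fn f ts) = Fn f (map (liftT c n) ts)"
| "liftT c n (Eps A) = Eps (liftF (Suc c) n A)"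
| "liftT c n (Tau A) = Tau (liftF (Suc c) n A)"
| "liftF c n (Atom P ts) = Atom P (map (liftT c n) ts)"
| "liftF c n (Neg A) = Neg (liftF c n A)"
| "liftF c n (Conj A B) = Conj (liftF c n A) (liftF c n B)"
| "liftF c n (Disj A B) = Disj (liftF c n A) (liftF c n B)"
| "liftF c n (Imp A B) = Imp (liftF c n A) (liftF c n B)"
| "liftF c n (All A) = All (liftF (Suc c) n A)"
| "liftF c n (Ex A) = Ex (liftF (Suc c) n A)"

text \<open>Substituting term u for bound index k (capture-avoiding de Bruijn substitution).
  For a body A (index 0 free), sbstF 0 t A is A(t).\<close>
primrec sbstT :: "nat \<Rightarrow> ('f,'p) trm \<Rightarrow> ('f,'p) trm \<Rightarrow> ('f,'p) trm"
  and sbstF :: "nat \<Rightarrow> ('f,'p) trm \<Rightarrow> ('f,'p) fm \<Rightarrow> ('f,'p) fm" where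
  "sbstT k u (Fr x) = Fr x"
| "sbstT k u (Bd i) = (if i < k then Bd i else if i = k then liftT 0 k u else Bd (i - 1))"
| "sbstT k u (Fn f ts) = Fn f (map (sbstT k u) ts)"
| "sbstT k u (Eps A) = Eps (sbstF (Suc k) u A)"
| "sbstT k u (Tau A) = Tau (sbstF (Suc k) u A)"
| "sbstF k u (Atom P ts) = Atom P (map (sbstT k u) ts)"
| "sbstF k u (Neg A) = Neg (sbstF k u A)"
| "sbstF k u (Conj A B) = Conj (sbstF k u A) (sbstF k u B)"
| "sbstF k u (Disj A B) = Disj (sbstF k u A) (sbstF k u B)"
| "sbstF k u (Imp A B) = Imp (sbstF k u A) (sbstF k u B)"
| "sbstF k u (All A) = All (sbstF (Suc k) u A)"
| "sbstF k u (Ex A) = Ex (sbstF (Suc k) u A)"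

text \<open>All dangling bound indices are below k (k = 0: well-formed, locally closed).\<close>
primrec lcT :: "nat \<Rightarrow> ('f,'p) trm \<Rightarrow> bool"
  and lcF :: "nat \<Rightarrow> ('f,'p) fm \<Rightarrow> bool" where
  "lcT k (Fr x) = True"
| "lcT k (Bd i) = (i < k)"
| "lcT k (Fn f ts) = (list_all (lcT k) ts)"
| "lcT k (Eps A) = lcF (Suc k) A"
| "lcT k (Tau A) = lcF (Suc k) A"
| "lcF k (Atom P ts) = (list_all (lcT k) ts)"
| "lcF k (Neg A) = lcF k A"
| "lcF k (Conj A B) = (lcF k A \<and> lcF k B)"
| "lcF k (Disj A B) = (lcF k A \<and> lcF k B)"
| "lcF k (Imp A B) = (lcF k A \<and> lcF k B)"
| "lcF k (All A) = lcF (Suc k) A"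
| "lcF k (Ex A) = lcF (Suc k) A"

primrec fvT :: "('f,'p) trm \<Rightarrow> nat set"
  and fvF :: "('f,'p) fm \<Rightarrow> nat set" where
  "fvT (Fr x) = {x}"
| "fvT (Bd i) = {}"
| "fvT (Fn f ts) = (\<Union> (set (map fvT ts)))"
| "fvT (Eps A) = fvF A"
| "fvT (Tau A) = fvF A"
| "fvF (Atom P ts) = (\<Union> (set (map fvT ts)))"
| "fvF (Neg A) = fvF A"
| "fvF (Conj A B) = fvF A \<union> fvF B"
| "fvF (Disj A B) = fvF A \<union> fvF B"
| "fvF (Imp A B) = fvF A \<union> fvF B"
| "fvF (All A) = fvF A"
| "fvF (Ex A) = fvF A"

text \<open>No epsilon/tau terms (the ordinary first-order language).\<close>
primrec efT :: "('f,'p) trm \<Rightarrow> bool"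
  and efF :: "('f,'p) fm \<Rightarrow> bool" where
  "efT (Fr x) = True"
| "efT (Bd i) = True"
| "efT (Fn f ts) = (list_all (efT) ts)"
| "efT (Eps A) = False"
| "efT (Tau A) = False"
| "efF (Atom P ts) = (list_all (efT) ts)"
| "efF (Neg A) = efF A"
| "efF (Conj A B) = (efF A \<and> efF B)"
| "efF (Disj A B) = (efF A \<and> efF B)"
| "efF (Imp A B) = (efF A \<and> efF B)"
| "efF (All A) = efF A"
| "efF (Ex A) = efF A"

text \<open>Quantifier-free, also inside epsilon/tau terms.\<close>
primrec qfT :: "('f,'p) trm \<Rightarrow> bool"
  and qfF :: "('f,'p) fm \<Rightarrow> bool" where
  "qfT (Fr x) = True"
| "qfT (Bd i) = True"
| "qfT (Fn f ts) = (list_all (qfT) ts)"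
| "qfT (Eps A) = qfF A"
| "qfT (Tau A) = qfF A"
| "qfF (Atom P ts) = (list_all (qfT) ts)"
| "qfF (Neg A) = qfF A"
| "qfF (Conj A B) = (qfF A \<and> qfF B)"
| "qfF (Disj A B) = (qfF A \<and> qfF B)"
| "qfF (Imp A B) = (qfF A \<and> qfF B)"
| "qfF (All A) = False"
| "qfF (Ex A) = False"

definition base_fm :: "('f,'p) fm \<Rightarrow> bool" where
  "base_fm A \<longleftrightarrow> lcF 0 A \<and> efF A"

primrec tsubT :: "(nat \<Rightarrow> ('f,'p) trm) \<Rightarrow> nat \<Rightarrow> ('f,'p) trm \<Rightarrow> ('f,'p) trm"
  and tsubF :: "(nat \<Rightarrow> ('f,'p) trm) \<Rightarrow> nat \<Rightarrow> ('f,'p) fm \<Rightarrow> ('f,'p) fm" where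
  "tsubT s d (Fr x) = liftT 0 d (s x)"
| "tsubT s d (Bd i) = Bd i"
| "tsubT s d (Fn f ts) = Fn f (map (tsubT s d) ts)"
| "tsubT s d (Eps A) = Eps (tsubF s (Suc d) A)"
| "tsubT s d (Tau A) = Tau (tsubF s (Suc d) A)"
| "tsubF s d (Atom P ts) = Atom P (map (tsubT s d) ts)"
| "tsubF s d (Neg A) = Neg (tsubF s d A)"
| "tsubF s d (Conj A B) = Conj (tsubF s d A) (tsubF s d B)"
| "tsubF s d (Disj A B) = Disj (tsubF s d A) (tsubF s d B)"
| "tsubF s d (Imp A B) = Imp (tsubF s d A) (tsubF s d B)"
| "tsubF s d (All A) = All (tsubF s (Suc d) A)"
| "tsubF s d (Ex A) = Ex (tsubF s (Suc d) A)"

text \<open>Instantiating the argument places (dangling indices 0..n-1) of a formula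
  by a list of terms ts; e counts the binders passed.\<close>
primrec instT :: "nat \<Rightarrow> ('f,'p) trm list \<Rightarrow> ('f,'p) trm \<Rightarrow> ('f,'p) trm"
  and instF :: "nat \<Rightarrow> ('f,'p) trm list \<Rightarrow> ('f,'p) fm \<Rightarrow> ('f,'p) fm" where
  "instT e ts (Fr x) = Fr x"
| "instT e ts (Bd i) = (if i < e then Bd i
      else if i - e < length ts then liftT 0 e (ts ! (i - e)) else Bd (i - length ts))"
| "instT e ts (Fn f us) = Fn f (map (instT e ts) us)"
| "instT e ts (Eps A) = Eps (instF (Suc e) ts A)"
| "instT e ts (Tau A) = Tau (instF (Suc e) ts A)"
| "instF e ts (Atom P us) = Atom P (map (instT e ts) us)"
| "instF e ts (Neg A) = Neg (instF e ts A)"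
| "instF e ts (Conj A B) = Conj (instF e ts A) (instF e ts B)"
| "instF e ts (Disj A B) = Disj (instF e ts A) (instF e ts B)"
| "instF e ts (Imp A B) = Imp (instF e ts A) (instF e ts B)"
| "instF e ts (All A) = All (instF (Suc e) ts A)"
| "instF e ts (Ex A) = Ex (instF (Suc e) ts A)"

text \<open>Substitution of formulas for predicate symbols: an n-ary predicate P is replaced
  by the formula s P n, whose argument places are the dangling indices 0..n-1.\<close>
primrec psubT :: "('p \<Rightarrow> nat \<Rightarrow> ('f,'p) fm) \<Rightarrow> ('f,'p) trm \<Rightarrow> ('f,'p) trm"
  and psubF :: "('p \<Rightarrow> nat \<Rightarrow> ('f,'p) fm) \<Rightarrow> ('f,'p) fm \<Rightarrow> ('f,'p) fm" where
  "psubT s (Fr x) = Fr x"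
| "psubT s (Bd i) = Bd i"
| "psubT s (Fn f ts) = Fn f (map (psubT s) ts)"
| "psubT s (Eps A) = Eps (psubF s A)"
| "psubT s (Tau A) = Tau (psubF s A)"
| "psubF s (Atom P ts) = instF 0 (map (psubT s) ts) (s P (length ts))"
| "psubF s (Neg A) = Neg (psubF s A)"
| "psubF s (Conj A B) = Conj (psubF s A) (psubF s B)"
| "psubF s (Disj A B) = Disj (psubF s A) (psubF s B)"
| "psubF s (Imp A B) = Imp (psubF s A) (psubF s B)"
| "psubF s (All A) = All (psubF s A)"
| "psubF s (Ex A) = Ex (psubF s A)"

definition psub_ok :: "(('f,'p) fm \<Rightarrow> bool) \<Rightarrow> ('p \<Rightarrow> nat \<Rightarrow> ('f,'p) fm) \<Rightarrow> bool" where
  "psub_ok LF s \<longleftrightarrow> (\<forall>P n. lcF n (s P n) \<and> LF (s P n))"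

definition tsub_ok :: "(('f,'p) trm \<Rightarrow> bool) \<Rightarrow> (nat \<Rightarrow> ('f,'p) trm) \<Rightarrow> bool" where
  "tsub_ok LT s \<longleftrightarrow> (\<forall>x. lcT 0 (s x) \<and> LT (s x))"

inductive hderiv :: "('f,'p) fm set \<Rightarrow> ('f,'p) fm \<Rightarrow> bool" for Ax where
  ax: "F \<in> Ax \<Longrightarrow> hderiv Ax F"
| mp: "hderiv Ax (Imp F G) \<Longrightarrow> hderiv Ax F \<Longrightarrow> hderiv Ax G"
| gen: "hderiv Ax (Imp B (sbstF 0 (Fr x) A)) \<Longrightarrow> x \<notin> fvF B \<Longrightarrow> x \<notin> fvF A
          \<Longrightarrow> hderiv Ax (Imp B (All A))"
| exr: "hderiv Ax (Imp (sbstF 0 (Fr x) A) B) \<Longrightarrow> x \<notin> fvF B \<Longrightarrow> x \<notin> fvF A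
          \<Longrightarrow> hderiv Ax (Imp (Ex A) B)"

inductive int_schema :: "('f,'p) fm \<Rightarrow> bool" where
  "int_schema (Imp A (Imp B A))"
| "int_schema (Imp (Imp A B) (Imp (Imp A (Imp B C)) (Imp A C)))"
| "int_schema (Imp A (Imp B (Conj A B)))"
| "int_schema (Imp (Conj A B) A)"
| "int_schema (Imp (Conj A B) B)"
| "int_schema (Imp A (Disj A B))"
| "int_schema (Imp B (Disj A B))"
| "int_schema (Imp (Imp A C) (Imp (Imp B C) (Imp (Disj A B) C)))"
| "int_schema (Imp (Imp A B) (Imp (Imp A (Neg B)) (Neg A)))"
| "int_schema (Imp (Neg A) (Imp A B))"
| "int_schema (Imp (All A) (sbstF 0 t A))"
| "int_schema (Imp (sbstF 0 t A) (Ex A))"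

definition IQC :: "('f,'p) fm set" where
  "IQC = {F. hderiv {G. int_schema G \<and> base_fm G} F}"

definition CQC :: "('f,'p) fm set" where
  "CQC = {F. hderiv {G. (int_schema G \<or> (\<exists>A. G = Disj A (Neg A))) \<and> base_fm G} F}"

definition intermediate_pred :: "('f,'p) fm set \<Rightarrow> bool" where
  "intermediate_pred QL \<longleftrightarrow>
     QL \<subseteq> {A. base_fm A} \<and> IQC \<subseteq> QL \<and> QL \<subseteq> CQC \<and>
     (\<forall>A B. Imp A B \<in> QL \<longrightarrow> A \<in> QL \<longrightarrow> B \<in> QL) \<and>
     (\<forall>A B x. Imp B (sbstF 0 (Fr x) A) \<in> QL \<longrightarrow> x \<notin> fvF B \<longrightarrow> x \<notin> fvF A
        \<longrightarrow> Imp B (All A) \<in> QL) \<and>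
     (\<forall>A B x. Imp (sbstF 0 (Fr x) A) B \<in> QL \<longrightarrow> x \<notin> fvF B \<longrightarrow> x \<notin> fvF A
        \<longrightarrow> Imp (Ex A) B \<in> QL) \<and>
     (\<forall>s A. A \<in> QL \<longrightarrow> tsub_ok (\<lambda>t. lcT 0 t \<and> efT t) s \<longrightarrow> tsubF s 0 A \<in> QL) \<and>
     (\<forall>s A. A \<in> QL \<longrightarrow> psub_ok efF s \<longrightarrow> psubF s A \<in> QL)"

section \<open>Critical formulas and the epsilon-tau calculi\<close>

text \<open>A is a body (index 0 is the variable x), so Eps A is epsilon x A(x).\<close>
definition critical :: "('f,'p) fm \<Rightarrow> bool" where
  "critical F \<longleftrightarrow> (\<exists>A t. lcF 1 A \<and> lcT 0 t \<and>
      (F = Imp (sbstF 0 t A) (sbstF 0 (Eps A) A) \<or>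
       F = Imp (sbstF 0 (Tau A) A) (sbstF 0 t A)))"

primrec pinst :: "(nat \<Rightarrow> ('f,'p) fm) \<Rightarrow> pf \<Rightarrow> ('f,'p) fm" where
  "pinst s (PV n) = s n"
| "pinst s (PNeg A) = Neg (pinst s A)"
| "pinst s (PConj A B) = Conj (pinst s A) (pinst s B)"
| "pinst s (PDisj A B) = Disj (pinst s A) (pinst s B)"
| "pinst s (PImp A B) = Imp (pinst s A) (pinst s B)"

inductive et_prov :: "pf set \<Rightarrow> ('f,'p) fm \<Rightarrow> bool" for L where
  inst: "A \<in> L \<Longrightarrow> (\<forall>n. lcF 0 (s n) \<and> qfF (s n)) \<Longrightarrow> et_prov L (pinst s A)"
| crit: "critical F \<Longrightarrow> qfF F \<Longrightarrow> et_prov L F"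
| mp: "et_prov L (Imp F G) \<Longrightarrow> et_prov L F \<Longrightarrow> et_prov L G"

text \<open>The extended calculus epsilon-tau+(QL): QL (all substitution instances of its
  theorems in the extended language), modus ponens and quantifier rules, from the
  critical formulas.\<close>
definition ext_axioms :: "('f,'p) fm set \<Rightarrow> ('f,'p) fm set" where
  "ext_axioms QL = {tsubF s 0 (psubF r A) | A r s. A \<in> QL \<and> psub_ok (\<lambda>_. True) r
      \<and> tsub_ok (\<lambda>_. True) s} \<union> {F. critical F}"

definition ext_prov :: "('f,'p) fm set \<Rightarrow> ('f,'p) fm \<Rightarrow> bool" where
  "ext_prov QL F \<longleftrightarrow> hderiv (ext_axioms QL) F"

primrec etr :: "('f,'p) fm \<Rightarrow> ('f,'p) fm" where
  "etr (Atom P ts) = Atom P ts"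
| "etr (Neg A) = Neg (etr A)"
| "etr (Conj A B) = Conj (etr A) (etr B)"
| "etr (Disj A B) = Disj (etr A) (etr B)"
| "etr (Imp A B) = Imp (etr A) (etr B)"
| "etr (Ex A) = sbstF 0 (Eps (etr A)) (etr A)"
| "etr (All A) = sbstF 0 (Tau (etr A)) (etr A)"

text \<open>The three schemata; A is a body (the variable x is index 0), B is a formula in
  which x does not occur.\<close>
definition CD :: "('f,'p) fm \<Rightarrow> ('f,'p) fm \<Rightarrow> ('f,'p) fm" where
  "CD A B = Imp (All (Disj A B)) (Disj (All A) B)"

definition Q_ex :: "('f,'p) fm \<Rightarrow> ('f,'p) fm \<Rightarrow> ('f,'p) fm" where
  "Q_ex A B = Imp (Imp B (Ex A)) (Ex (Imp B A))"

definition Q_all :: "('f,'p) fm \<Rightarrow> ('f,'p) fm \<Rightarrow> ('f,'p) fm" where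
  "Q_all A B = Imp (Imp (All A) B) (Ex (Imp A B))"

end

theory Submission
  imports Defs
begin

(* Under the epsilon-tau translation each of the three schemata becomes literally a single
   critical formula: CD^et is D(tau D) -> D(tau A) for D = A v B, Q_ex^et is
   E(eps A) -> E(eps E) for E = B -> A, and Q_all^et is E(tau A) -> E(eps E) for E = A -> B
   (B is closed, so substitution leaves it alone). Part (1) therefore holds for every L.
   In epsilon-tau+(QL) the same critical formulas, together with A(tau A) -> All x A and
   Ex x A -> A(eps A) (obtained from critical formulas by the quantifier rules) and the
   quantifier axioms of QL, yield CD, Q_ex and Q_all by intuitionistic propositional
   reasoning. *)

lemma lc_mono:
  fixes u :: "('f,'p) trm" and F :: "('f,'p) fm"
  shows "lcT k u \<Longrightarrow> k \<le> m \<Longrightarrow> lcT m u" and "lcF k F \<Longrightarrow> k \<le> m \<Longrightarrow> lcF m F"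
  by (induct u and F arbitrary: k m and k m) (auto simp: list_all_iff)

lemma lc_lift:
  fixes u :: "('f,'p) trm" and F :: "('f,'p) fm"
  shows "lcT m u \<Longrightarrow> lcT (m + n) (liftT c n u)" and "lcF m F \<Longrightarrow> lcF (m + n) (liftF c n F)"
  by (induct u and F arbitrary: m c and m c) (auto simp: list_all_iff, (metis add_Suc)+)

lemma lc_sbst:
  fixes u :: "('f,'p) trm" and F :: "('f,'p) fm"
  shows "lcT (Suc m) u \<Longrightarrow> k \<le> m \<Longrightarrow> lcT (m - k) t \<Longrightarrow> lcT m (sbstT k t u)"
    and "lcF (Suc m) F \<Longrightarrow> k \<le> m \<Longrightarrow> lcT (m - k) t \<Longrightarrow> lcF m (sbstF k t F)"
proof (induct u and F arbitrary: m k and m k)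
  case (Bd i)
  then show ?case using lc_lift(1)[of "m - k" t k 0] by auto
qed (auto simp: list_all_iff)

lemma lc_instance: "lcF 1 F \<Longrightarrow> lcT 0 t \<Longrightarrow> lcF 0 (sbstF 0 t F)"
  using lc_sbst(2)[of 0 F 0 t] by simp

lemma sbst_lc_id:
  fixes u :: "('f,'p) trm" and F :: "('f,'p) fm"
  shows "lcT k u \<Longrightarrow> k \<le> j \<Longrightarrow> sbstT j t u = u" and "lcF k F \<Longrightarrow> k \<le> j \<Longrightarrow> sbstF j t F = F"
  by (induct u and F arbitrary: k j and k j) (auto simp: list_all_iff intro!: map_idI)

lemma sbst_closed: "lcF 0 F \<Longrightarrow> sbstF k t F = F"
  using sbst_lc_id(2) by blast

lemma sbst_Bd0_id:
  fixes u :: "('f,'p) trm" and F :: "('f,'p) fm"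
  shows "lcT (Suc k) u \<Longrightarrow> sbstT k (Bd 0) u = u" and "lcF (Suc k) F \<Longrightarrow> sbstF k (Bd 0) F = F"
  by (induct u and F arbitrary: k and k) (auto simp: list_all_iff intro!: map_idI)

lemma inst_single:
  fixes u :: "('f,'p) trm" and F :: "('f,'p) fm"
  shows "instT e [t] u = sbstT e t u" and "instF e [t] F = sbstF e t F"
  by (induct u and F arbitrary: e and e) auto

lemma inst_lc_id:
  fixes u :: "('f,'p) trm" and F :: "('f,'p) fm"
  shows "lcT e u \<Longrightarrow> instT e ts u = u" and "lcF e F \<Longrightarrow> instF e ts F = F"
  by (induct u and F arbitrary: e and e) (auto simp: list_all_iff intro!: map_idI)

lemma qf_lift:
  fixes u :: "('f,'p) trm" and F :: "('f,'p) fm"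
  shows "qfT (liftT c n u) = qfT u" and "qfF (liftF c n F) = qfF F"
  by (induct u and F arbitrary: c and c) (auto simp: list_all_iff)

lemma qf_sbst:
  fixes u :: "('f,'p) trm" and F :: "('f,'p) fm"
  shows "qfT t \<Longrightarrow> qfT u \<Longrightarrow> qfT (sbstT k t u)" and "qfT t \<Longrightarrow> qfF F \<Longrightarrow> qfF (sbstF k t F)"
  by (induct u and F arbitrary: k and k) (auto simp: list_all_iff qf_lift)

lemma fv_finite:
  fixes u :: "('f,'p) trm" and F :: "('f,'p) fm"
  shows "finite (fvT u)" and "finite (fvF F)"
  by (induct u and F) auto

lemma exists_fresh: "\<exists>y. y \<notin> fvF F"
  using fv_finite(2) infinite_UNIV_nat ex_new_if_finite by blast

lemma fv_lift:
  fixes u :: "('f,'p) trm" and F :: "('f,'p) fm"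
  shows "fvT (liftT c n u) = fvT u" and "fvF (liftF c n F) = fvF F"
  by (induct u and F arbitrary: c and c) auto

lemma fv_sbst:
  fixes u :: "('f,'p) trm" and F :: "('f,'p) fm"
  shows "fvT (sbstT k t u) \<subseteq> fvT u \<union> fvT t" and "fvF (sbstF k t F) \<subseteq> fvF F \<union> fvT t"
  by (induct u and F arbitrary: k and k) (auto simp: fv_lift)

lemma tsub_id:
  fixes u :: "('f,'p) trm" and F :: "('f,'p) fm"
  shows "(\<forall>x\<in>fvT u. s x = Fr x) \<Longrightarrow> tsubT s d u = u"
    and "(\<forall>x\<in>fvF F. s x = Fr x) \<Longrightarrow> tsubF s d F = F"
  by (induct u and F arbitrary: d and d) (auto simp: map_idI)

lemma tsub_sbst_fresh:
  fixes u :: "('f,'p) trm" and F :: "('f,'p) fm"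
  shows "y \<notin> fvT u \<Longrightarrow> tsubT (Fr(y := t)) k (sbstT k (Fr y) u) = sbstT k t u"
    and "y \<notin> fvF F \<Longrightarrow> tsubF (Fr(y := t)) k (sbstF k (Fr y) F) = sbstF k t F"
  by (induct u and F arbitrary: k and k) auto

lemma lc_etr: "lcF k F \<Longrightarrow> lcF k (etr F)"
  by (induct F arbitrary: k) (auto intro: lc_sbst(2))

lemma qf_etr:
  fixes u :: "('f,'p) trm" and F :: "('f,'p) fm"
  shows "efT u \<Longrightarrow> qfT u" and "efF F \<Longrightarrow> qfF (etr F)"
  by (induct u and F) (auto simp: list_all_iff qf_sbst)

section \<open>The translated schemata are critical formulas\<close>

lemma critical_tauI: "lcF 1 F \<Longrightarrow> lcT 0 t \<Longrightarrow> critical (Imp (sbstF 0 (Tau F) F) (sbstF 0 t F))"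
  unfolding critical_def by blast

lemma critical_epsI: "lcF 1 F \<Longrightarrow> lcT 0 t \<Longrightarrow> critical (Imp (sbstF 0 t F) (sbstF 0 (Eps F) F))"
  unfolding critical_def by blast

lemma critical_etr_CD:
  assumes "lcF 1 A" and "lcF 0 B"
  shows "critical (etr (CD A B))"
proof -
  have "lcF 1 (etr A)" and "lcF 0 (etr B)" using assms by (simp_all add: lc_etr)
  then have "critical (Imp (sbstF 0 (Tau (Disj (etr A) (etr B))) (Disj (etr A) (etr B)))
      (sbstF 0 (Tau (etr A)) (Disj (etr A) (etr B))))"
    by (intro critical_tauI) (auto intro: lc_mono(2))
  then show ?thesis using \<open>lcF 0 (etr B)\<close> by (simp add: CD_def sbst_closed)
qed

lemma critical_etr_Q_ex:
  assumes "lcF 1 A" and "lcF 0 B"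
  shows "critical (etr (Q_ex A B))"
proof -
  have "lcF 1 (etr A)" and "lcF 0 (etr B)" using assms by (simp_all add: lc_etr)
  then have "critical (Imp (sbstF 0 (Eps (etr A)) (Imp (etr B) (etr A)))
      (sbstF 0 (Eps (Imp (etr B) (etr A))) (Imp (etr B) (etr A))))"
    by (intro critical_epsI) (auto intro: lc_mono(2))
  then show ?thesis using \<open>lcF 0 (etr B)\<close> by (simp add: Q_ex_def sbst_closed)
qed

lemma critical_etr_Q_all:
  assumes "lcF 1 A" and "lcF 0 B"
  shows "critical (etr (Q_all A B))"
proof -
  have "lcF 1 (etr A)" and "lcF 0 (etr B)" using assms by (simp_all add: lc_etr)
  then have "critical (Imp (sbstF 0 (Tau (etr A)) (Imp (etr A) (etr B)))
      (sbstF 0 (Eps (Imp (etr A) (etr B))) (Imp (etr A) (etr B))))"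
    by (intro critical_epsI) (auto intro: lc_mono(2))
  then show ?thesis using \<open>lcF 0 (etr B)\<close> by (simp add: Q_all_def sbst_closed)
qed

lemma psub_pinst: "psubF r (pinst \<sigma> \<phi>) = pinst (\<lambda>n. psubF r (\<sigma> n)) \<phi>"
  by (induct \<phi>) auto

lemma base_fm_pinst: "(\<And>n. base_fm (\<sigma> n)) \<Longrightarrow> base_fm (pinst \<sigma> \<phi>)"
  by (induct \<phi>) (auto simp: base_fm_def)

lemma IQC_pinst:
  assumes "ipc \<phi>" and "\<And>n. base_fm (\<sigma> n)"
  shows "pinst \<sigma> \<phi> \<in> IQC"
proof -
  have closed: "lcF 0 (pinst \<sigma> \<psi>) \<and> efF (pinst \<sigma> \<psi>)" for \<psi>
    using base_fm_pinst assms(2) unfolding base_fm_def by blast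
  show ?thesis
    using assms(1) unfolding IQC_def
  proof (induct \<phi> rule: ipc.induct)
    case (mp \<phi> \<psi>)
    then show ?case by (auto intro: hderiv.mp)
  qed (use closed in \<open>auto intro!: hderiv.ax int_schema.intros simp: base_fm_def\<close>)
qed

lemma int_schema_in_QL:
  fixes QL :: "('f,'p) fm set"
  shows "intermediate_pred QL \<Longrightarrow> int_schema F \<Longrightarrow> base_fm F \<Longrightarrow> F \<in> QL"
  unfolding intermediate_pred_def IQC_def by (auto intro: hderiv.ax)

lemma ext_axiomsI:
  fixes QL :: "('f,'p) fm set"
  assumes "F \<in> QL" and "psub_ok (\<lambda>_. True) r" and "tsub_ok (\<lambda>_. True) s"
  shows "tsubF s 0 (psubF r F) \<in> ext_axioms QL"
  using assms unfolding ext_axioms_def by blast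

lemma ext_axioms_tautology:
  fixes QL :: "('f,'p) fm set"
  assumes QL: "intermediate_pred QL" and "ipc \<phi>" and closed: "\<And>n. lcF 0 (fs n)"
  shows "pinst fs \<phi> \<in> ext_axioms QL"
proof -
  fix P :: 'p
  \<comment> \<open>The predicate type may be a singleton, so the propositional variable n is
    encoded by an n-ary atom; its arity tells the predicate substitution what to insert.\<close>
  define \<sigma> where "\<sigma> n = (Atom P (replicate n (Fr 0)) :: ('f,'p) fm)" for n
  have "base_fm (\<sigma> n)" for n
    by (simp add: \<sigma>_def base_fm_def list_all_iff)
  then have "pinst \<sigma> \<phi> \<in> QL"
    using QL IQC_pinst[OF \<open>ipc \<phi>\<close>] by (auto simp: intermediate_pred_def)
  moreover have "psub_ok (\<lambda>_. True) (\<lambda>_ n. fs n)"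
    using closed lc_mono(2) unfolding psub_ok_def by blast
  moreover have "tsub_ok (\<lambda>_. True) Fr"
    by (simp add: tsub_ok_def)
  ultimately have "tsubF Fr 0 (psubF (\<lambda>_ n. fs n) (pinst \<sigma> \<phi>)) \<in> ext_axioms QL"
    by (rule ext_axiomsI)
  then show ?thesis
    using closed by (simp add: psub_pinst \<sigma>_def inst_lc_id tsub_id)
qed

lemma unary_atom_instance:
  fixes F :: "('f,'p) fm"
  assumes "lcF 1 F" and "lcT 0 t" and "y \<notin> fvF F"
  obtains r s where "psub_ok (\<lambda>_. True) r" and "tsub_ok (\<lambda>_. True) s"
    and "tsubF s 1 (psubF r (Atom P [Bd 0])) = F"
    and "tsubF s 0 (psubF r (Atom P [Fr y])) = sbstF 0 t F"
proof
  let ?r = "\<lambda>Q n. if n = 1 then F else Atom Q []"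
  show "psub_ok (\<lambda>_. True) ?r" and "tsub_ok (\<lambda>_. True) (Fr(y := t))"
    using assms by (auto simp: psub_ok_def tsub_ok_def)
  show "tsubF (Fr(y := t)) 1 (psubF ?r (Atom P [Bd 0])) = F"
    using assms tsub_id(2)[of F "Fr(y := t)"] by (simp add: inst_single sbst_Bd0_id)
  show "tsubF (Fr(y := t)) 0 (psubF ?r (Atom P [Fr y])) = sbstF 0 t F"
    using assms tsub_sbst_fresh(2)[of y F t 0] by (simp add: inst_single)
qed

lemma ext_axioms_All_elim:
  fixes QL :: "('f,'p) fm set"
  assumes "intermediate_pred QL" and "lcF 1 F" and "lcT 0 t"
  shows "Imp (All F) (sbstF 0 t F) \<in> ext_axioms QL"
proof -
  fix P :: 'p
  obtain y where y: "y \<notin> fvF F" using exists_fresh by blast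
  let ?G = "Imp (All (Atom P [Bd 0])) (sbstF 0 (Fr y) (Atom P [Bd 0]))"
  have "?G \<in> QL"
    by (rule int_schema_in_QL[OF assms(1) int_schema.intros(11)]) (simp add: base_fm_def)
  moreover obtain r s where "psub_ok (\<lambda>_. True) r" and "tsub_ok (\<lambda>_. True) s"
    and eq: "tsubF s 1 (psubF r (Atom P [Bd 0])) = F"
    and "tsubF s 0 (psubF r (Atom P [Fr y])) = sbstF 0 t F"
    using unary_atom_instance[OF assms(2,3) y] .
  ultimately show ?thesis
    using ext_axiomsI[of ?G QL r s] by (simp add: eq)
qed

lemma ext_axioms_Ex_intro:
  fixes QL :: "('f,'p) fm set"
  assumes "intermediate_pred QL" and "lcF 1 F" and "lcT 0 t"
  shows "Imp (sbstF 0 t F) (Ex F) \<in> ext_axioms QL"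
proof -
  fix P :: 'p
  obtain y where y: "y \<notin> fvF F" using exists_fresh by blast
  let ?G = "Imp (sbstF 0 (Fr y) (Atom P [Bd 0])) (Ex (Atom P [Bd 0]))"
  have "?G \<in> QL"
    by (rule int_schema_in_QL[OF assms(1) int_schema.intros(12)]) (simp add: base_fm_def)
  moreover obtain r s where "psub_ok (\<lambda>_. True) r" and "tsub_ok (\<lambda>_. True) s"
    and eq: "tsubF s 1 (psubF r (Atom P [Bd 0])) = F"
    and "tsubF s 0 (psubF r (Atom P [Fr y])) = sbstF 0 t F"
    using unary_atom_instance[OF assms(2,3) y] .
  ultimately show ?thesis
    using ext_axiomsI[of ?G QL r s] by (simp add: eq)
qed

lemma ext_prov_critical: "critical F \<Longrightarrow> ext_prov QL F"
  unfolding ext_prov_def ext_axioms_def by (simp add: hderiv.ax)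

lemma ext_prov_tau_All:
  assumes "lcF 1 F"
  shows "ext_prov QL (Imp (sbstF 0 (Tau F) F) (All F))"
proof -
  obtain y where y: "y \<notin> fvF F" using exists_fresh by blast
  have "ext_prov QL (Imp (sbstF 0 (Tau F) F) (sbstF 0 (Fr y) F))"
    using assms by (simp add: ext_prov_critical critical_tauI)
  moreover have "y \<notin> fvF (sbstF 0 (Tau F) F)" using fv_sbst(2)[of 0 "Tau F" F] y by auto
  ultimately show ?thesis using y unfolding ext_prov_def by (rule hderiv.gen)
qed

lemma ext_prov_Ex_eps:
  assumes "lcF 1 F"
  shows "ext_prov QL (Imp (Ex F) (sbstF 0 (Eps F) F))"
proof -
  obtain y where y: "y \<notin> fvF F" using exists_fresh by blast
  have "ext_prov QL (Imp (sbstF 0 (Fr y) F) (sbstF 0 (Eps F) F))"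
    using assms by (simp add: ext_prov_critical critical_epsI)
  moreover have "y \<notin> fvF (sbstF 0 (Eps F) F)" using fv_sbst(2)[of 0 "Eps F" F] y by auto
  ultimately show ?thesis using y unfolding ext_prov_def by (rule hderiv.exr)
qed

lemma ext_prov_mp: "ext_prov QL (Imp F G) \<Longrightarrow> ext_prov QL F \<Longrightarrow> ext_prov QL G"
  unfolding ext_prov_def by (rule hderiv.mp)

context
  fixes QL :: "('f,'p) fm set"
  assumes QL: "intermediate_pred QL"
begin

lemma ext_prov_All_elim: "lcF 1 F \<Longrightarrow> lcT 0 t \<Longrightarrow> ext_prov QL (Imp (All F) (sbstF 0 t F))"
  unfolding ext_prov_def using QL by (intro hderiv.ax ext_axioms_All_elim)

lemma ext_prov_Ex_intro: "lcF 1 F \<Longrightarrow> lcT 0 t \<Longrightarrow> ext_prov QL (Imp (sbstF 0 t F) (Ex F))"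
  unfolding ext_prov_def using QL by (intro hderiv.ax ext_axioms_Ex_intro)

lemma ext_prov_tautology:
  assumes "ipc \<phi>" and "lcF 0 X" and "lcF 0 Y" and "lcF 0 Z"
  shows "ext_prov QL (pinst (\<lambda>n. if n = 0 then X else if n = 1 then Y else Z) \<phi>)"
  unfolding ext_prov_def using QL assms by (intro hderiv.ax ext_axioms_tautology) auto

lemma ext_prov_K:
  assumes "ext_prov QL X" and "lcF 0 X" and "lcF 0 Y"
  shows "ext_prov QL (Imp Y X)"
proof -
  have "ext_prov QL (Imp X (Imp Y X))"
    using ext_prov_tautology[OF ipc.i1[of "PV 0" "PV 1"] assms(2,3,2)] by simp
  then show ?thesis using assms(1) by (rule ext_prov_mp)
qed

lemma ext_prov_S:
  assumes "ext_prov QL (Imp X Y)" and "ext_prov QL (Imp X (Imp Y Z))"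
    and "lcF 0 X" and "lcF 0 Y" and "lcF 0 Z"
  shows "ext_prov QL (Imp X Z)"
proof -
  have "ext_prov QL (Imp (Imp X Y) (Imp (Imp X (Imp Y Z)) (Imp X Z)))"
    using ext_prov_tautology[OF ipc.i2[of "PV 0" "PV 1" "PV 2"] assms(3-5)] by simp
  then show ?thesis using assms(1,2) by (blast intro: ext_prov_mp)
qed

lemma ext_prov_imp_trans:
  assumes "ext_prov QL (Imp X Y)" and "ext_prov QL (Imp Y Z)"
    and "lcF 0 X" and "lcF 0 Y" and "lcF 0 Z"
  shows "ext_prov QL (Imp X Z)"
proof (rule ext_prov_S[OF assms(1) _ assms(3-5)])
  show "ext_prov QL (Imp X (Imp Y Z))"
    by (rule ext_prov_K[OF assms(2) _ assms(3)]) (use assms(4,5) in simp)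
qed

lemma ext_prov_disj_mono:
  assumes "ext_prov QL (Imp X Y)" and "lcF 0 X" and "lcF 0 Y" and "lcF 0 B"
  shows "ext_prov QL (Imp (Disj X B) (Disj Y B))"
proof -
  have "ext_prov QL (Imp Y (Disj Y B))"
    using ext_prov_tautology[OF ipc.i6[of "PV 0" "PV 1"] assms(3,4,4)] by simp
  with assms(1) have "ext_prov QL (Imp X (Disj Y B))"
    by (rule ext_prov_imp_trans) (use assms in simp_all)
  moreover have "ext_prov QL (Imp B (Disj Y B))"
    using ext_prov_tautology[OF ipc.i7[of "PV 1" "PV 0"] assms(3,4,4)] by simp
  moreover have "ext_prov QL (Imp (Imp X (Disj Y B))
      (Imp (Imp B (Disj Y B)) (Imp (Disj X B) (Disj Y B))))"
    using ext_prov_tautology[OF ipc.i8[of "PV 0" "PV 2" "PV 1"], of X B "Disj Y B"] assms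
    by simp
  ultimately show ?thesis by (blast intro: ext_prov_mp)
qed

lemma ext_prov_imp_mono:
  assumes "ext_prov QL (Imp X Y)" and "lcF 0 X" and "lcF 0 Y" and "lcF 0 B"
  shows "ext_prov QL (Imp (Imp B X) (Imp B Y))"
proof (rule ext_prov_S)
  show "ext_prov QL (Imp (Imp B X) (Imp B (Imp X Y)))"
    by (rule ext_prov_K[OF ext_prov_K[OF assms(1)]]) (use assms in simp_all)
  show "ext_prov QL (Imp (Imp B X) (Imp (Imp B (Imp X Y)) (Imp B Y)))"
    using ext_prov_tautology[OF ipc.i2[of "PV 0" "PV 1" "PV 2"] assms(4,2,3)] by simp
qed (use assms in simp_all)

lemma ext_prov_imp_antimono:
  assumes "ext_prov QL (Imp X Y)" and "lcF 0 X" and "lcF 0 Y" and "lcF 0 B"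
  shows "ext_prov QL (Imp (Imp Y B) (Imp X B))"
proof (rule ext_prov_imp_trans)
  show "ext_prov QL (Imp (Imp Y B) (Imp X (Imp Y B)))"
    using ext_prov_tautology[OF ipc.i1[of "PV 0" "PV 1"] _ assms(2,2), of "Imp Y B"] assms
    by simp
  have "ext_prov QL (Imp (Imp X Y) (Imp (Imp X (Imp Y B)) (Imp X B)))"
    using ext_prov_tautology[OF ipc.i2[of "PV 0" "PV 1" "PV 2"] assms(2-4)] by simp
  then show "ext_prov QL (Imp (Imp X (Imp Y B)) (Imp X B))"
    using assms(1) by (rule ext_prov_mp)
qed (use assms in simp_all)

lemma ext_prov_CD:
  assumes "lcF 1 A" and "lcF 0 B"
  shows "ext_prov QL (CD A B)"
proof -
  let ?D = "Disj A B"
  have closed: "lcF 1 ?D" "lcF 0 (sbstF 0 (Tau ?D) A)" "lcF 0 (sbstF 0 (Tau A) A)"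
    using assms lc_mono(2)[of 0 B 1] by (simp_all add: lc_instance)
  have "ext_prov QL (Imp (All ?D) (Disj (sbstF 0 (Tau ?D) A) B))"
    using ext_prov_All_elim[of ?D "Tau ?D"] closed assms by (simp add: sbst_closed)
  moreover have "ext_prov QL (Imp (Disj (sbstF 0 (Tau ?D) A) B) (Disj (sbstF 0 (Tau A) A) B))"
    using ext_prov_critical[OF critical_tauI[of ?D "Tau A"]] closed assms by (simp add: sbst_closed)
  ultimately have "ext_prov QL (Imp (All ?D) (Disj (sbstF 0 (Tau A) A) B))"
    by (rule ext_prov_imp_trans) (use closed assms in simp_all)
  moreover have "ext_prov QL (Imp (Disj (sbstF 0 (Tau A) A) B) (Disj (All A) B))"
    by (rule ext_prov_disj_mono[OF ext_prov_tau_All[OF assms(1)] closed(3) _ assms(2)])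
      (use assms in simp)
  ultimately show ?thesis
    unfolding CD_def by (rule ext_prov_imp_trans) (use closed assms in simp_all)
qed

lemma ext_prov_Q_ex:
  assumes "lcF 1 A" and "lcF 0 B"
  shows "ext_prov QL (Q_ex A B)"
proof -
  let ?E = "Imp B A"
  have closed: "lcF 1 ?E" "lcF 0 (sbstF 0 (Eps A) A)" "lcF 0 (sbstF 0 (Eps ?E) A)"
    using assms lc_mono(2)[of 0 B 1] by (simp_all add: lc_instance)
  have "ext_prov QL (Imp (Imp B (Ex A)) (Imp B (sbstF 0 (Eps A) A)))"
    by (rule ext_prov_imp_mono[OF ext_prov_Ex_eps[OF assms(1)] _ closed(2) assms(2)])
      (use assms in simp)
  moreover have "ext_prov QL (Imp (Imp B (sbstF 0 (Eps A) A)) (Imp B (sbstF 0 (Eps ?E) A)))"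
    using ext_prov_critical[OF critical_epsI[of ?E "Eps A"]] closed assms by (simp add: sbst_closed)
  ultimately have "ext_prov QL (Imp (Imp B (Ex A)) (Imp B (sbstF 0 (Eps ?E) A)))"
    by (rule ext_prov_imp_trans) (use closed assms in simp_all)
  moreover have "ext_prov QL (Imp (Imp B (sbstF 0 (Eps ?E) A)) (Ex ?E))"
    using ext_prov_Ex_intro[of ?E "Eps ?E"] closed assms by (simp add: sbst_closed)
  ultimately show ?thesis
    unfolding Q_ex_def by (rule ext_prov_imp_trans) (use closed assms in simp_all)
qed

lemma ext_prov_Q_all:
  assumes "lcF 1 A" and "lcF 0 B"
  shows "ext_prov QL (Q_all A B)"
proof -
  let ?E = "Imp A B"
  have closed: "lcF 1 ?E" "lcF 0 (sbstF 0 (Tau A) A)" "lcF 0 (sbstF 0 (Eps ?E) A)"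
    using assms lc_mono(2)[of 0 B 1] by (simp_all add: lc_instance)
  have "ext_prov QL (Imp (Imp (All A) B) (Imp (sbstF 0 (Tau A) A) B))"
    by (rule ext_prov_imp_antimono[OF ext_prov_tau_All[OF assms(1)] closed(2) _ assms(2)])
      (use assms in simp)
  moreover have "ext_prov QL (Imp (Imp (sbstF 0 (Tau A) A) B) (Imp (sbstF 0 (Eps ?E) A) B))"
    using ext_prov_critical[OF critical_epsI[of ?E "Tau A"]] closed assms by (simp add: sbst_closed)
  ultimately have "ext_prov QL (Imp (Imp (All A) B) (Imp (sbstF 0 (Eps ?E) A) B))"
    by (rule ext_prov_imp_trans) (use closed assms in simp_all)
  moreover have "ext_prov QL (Imp (Imp (sbstF 0 (Eps ?E) A) B) (Ex ?E))"
    using ext_prov_Ex_intro[of ?E "Eps ?E"] closed assms by (simp add: sbst_closed)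
  ultimately show ?thesis
    unfolding Q_all_def by (rule ext_prov_imp_trans) (use closed assms in simp_all)
qed

end

theorem mainTheorem1:
  fixes L :: "pf set" and QL :: "('f,'p) fm set" and A B :: "('f,'p) fm"
  assumes "intermediate_prop L" and "intermediate_pred QL"
    and "lcF 1 A" and "efF A" and "base_fm B"
  shows "et_prov L (etr (CD A B)) \<and> et_prov L (etr (Q_ex A B)) \<and> et_prov L (etr (Q_all A B))
     \<and> ext_prov QL (CD A B) \<and> ext_prov QL (Q_ex A B) \<and> ext_prov QL (Q_all A B)"
proof -
  have "lcF 0 B" and "efF B" using \<open>base_fm B\<close> by (simp_all add: base_fm_def)
  have et_prov_etr: "et_prov L (etr F)" if "critical (etr F)" and "efF F" for F :: "('f,'p) fm"
    using that by (intro et_prov.crit qf_etr(2))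
  have "efF (CD A B)" "efF (Q_ex A B)" "efF (Q_all A B)"
    using \<open>efF A\<close> \<open>efF B\<close> by (simp_all add: CD_def Q_ex_def Q_all_def)
  then show ?thesis
    using assms(3) \<open>lcF 0 B\<close> et_prov_etr
      critical_etr_CD critical_etr_Q_ex critical_etr_Q_all
      ext_prov_CD[OF assms(2)] ext_prov_Q_ex[OF assms(2)] ext_prov_Q_all[OF assms(2)]
    by blast
qed

end
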